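(* Let $\alpha\in L^1(\mathbb{R})$ be even and let $w\in C^1(\mathbb{R})$ be odd with $w(0)=0$; set $W(\eta)=\int_0^\eta w(\rho)\,d\rho$. Let $\varphi,\psi\in L^1(\mathbb{R})\cap L^\infty(\mathbb{R})$ and let $u$ be a solution on $[0,T)$ (with $u\in C^2([0,T'],L^1(\mathbb{R})\cap L^\infty(\mathbb{R}))$ for every $T'<T$) of $$u_{tt}(x,t)=\int_{\mathbb{R}} \alpha(y-x)\, w\big(u(y,t)-u(x,t)\big)\,dy,\qquad u(x,0)=\varphi(x),\ u_t(x,0)=\psi(x).$$ Then the energy $$E(t)=\frac12\|u_t(t)\|_2^2+\frac12\int_{\mathbb{R}^2}\alpha(y-x)\,W\big(u(y,t)-u(x,t)\big)\,dy\,dx$$ is well defined and constant for $t\in[0,T)$. *)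

theory Defs
  imports "HOL-Analysis.Analysis" "HOL-Probability.Essential_Supremum"
begin

text \<open>The Banach space X = L^1(R) \<inter> L^\<infinity>(R), with norm ||f||_1 + ||f||_\<infinity>,
  elements represented by (measurable) pointwise representatives.\<close>

definition inX :: "(real \<Rightarrow> real) \<Rightarrow> bool" where
  "inX f \<longleftrightarrow> f \<in> borel_measurable lborel \<and> integrable lborel f
           \<and> esssup lborel (\<lambda>x. ereal \<bar>f x\<bar>) < \<infinity>"

definition Xnorm :: "(real \<Rightarrow> real) \<Rightarrow> ereal" where
  "Xnorm f = enn2ereal (\<integral>\<^sup>+ x. ennreal \<bar>f x\<bar> \<partial>lborel) + esssup lborel (\<lambda>x. ereal \<bar>f x\<bar>)"

definition X_has_deriv_within ::
  "(real \<Rightarrow> real \<Rightarrow> real) \<Rightarrow> (real \<Rightarrow> real \<Rightarrow> real) \<Rightarrow> real \<Rightarrow> real set \<Rightarrow> bool" where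
  "X_has_deriv_within U V t S \<longleftrightarrow>
     ((\<lambda>h. Xnorm (\<lambda>x. (U (t + h) x - U t x) / h - V t x)) \<longlongrightarrow> 0)
       (at 0 within {h. t + h \<in> S})"

definition X_continuous_on :: "real set \<Rightarrow> (real \<Rightarrow> real \<Rightarrow> real) \<Rightarrow> bool" where
  "X_continuous_on S U \<longleftrightarrow>
     (\<forall>t\<in>S. ((\<lambda>s. Xnorm (\<lambda>x. U s x - U t x)) \<longlongrightarrow> 0) (at t within S))"

text \<open>Potential W(\<eta>) = \<integral>_0^\<eta> w (oriented integral).\<close>
definition Wpot :: "(real \<Rightarrow> real) \<Rightarrow> real \<Rightarrow> real" where
  "Wpot w \<eta> = (LBINT \<rho>=0..\<eta>. w \<rho>)"

definition energy ::
  "(real \<Rightarrow> real) \<Rightarrow> (real \<Rightarrow> real) \<Rightarrow> (real \<Rightarrow> real \<Rightarrow> real) \<Rightarrow> (real \<Rightarrow> real \<Rightarrow> real) \<Rightarrow> real \<Rightarrow> real" where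
  "energy \<alpha> w u u1 t =
     1/2 * (LINT x|lborel. (u1 t x)\<^sup>2)
   + 1/2 * (LINT p|(lborel \<Otimes>\<^sub>M lborel). \<alpha> (snd p - fst p) * Wpot w (u t (snd p) - u t (fst p)))"

end

theory Submission
  imports Defs
begin

(* Along the solution, the kinetic part of E has derivative int u_t u_tt and the potential part has
   derivative 1/2 int int alpha(y - x) w(u(y) - u(x)) (u_t(y) - u_t(x)) dy dx.  Exchanging x and y,
   evenness of alpha and oddness of w turn the latter into
   - int u_t(x) int alpha(y - x) w(u(y) - u(x)) dy dx = - int u_t u_tt, so E' = 0.
   Both derivatives exist because differentiability in L^1 /\ L^inf makes the difference quotients
   converge in L^1 while staying bounded almost everywhere: every remainder is then dominated by an
   integral against the kernel |alpha(y - x)|, whose mass in either variable is the L^1 norm of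
   alpha, and W(a + h s) - W(a) - h s w(a) is small relative to h s by uniform continuity of w on
   bounded sets. *)

section \<open>Integration against a translation kernel on the plane\<close>

abbreviation lborel2 :: "(real \<times> real) measure" where
  "lborel2 \<equiv> lborel \<Otimes>\<^sub>M lborel"

lemma AE_lborel2_fst_snd:
  assumes "AE x in lborel. Q x"
  shows "AE p in lborel2. Q (fst p) \<and> Q (snd p)"
proof -
  obtain N where N: "N \<in> null_sets lborel" "{x \<in> space lborel. \<not> Q x} \<subseteq> N"
    using assms by (elim AE_E3) blast
  have "N \<times> UNIV \<in> null_sets lborel2" "UNIV \<times> N \<in> null_sets lborel2"
    using N by auto
  then have "N \<times> UNIV \<union> UNIV \<times> N \<in> null_sets lborel2" by blast
  then show ?thesis
    by (rule AE_I') (use N in \<open>auto simp: space_pair_measure\<close>)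
qed

lemma AE_lborel2_even:
  fixes \<alpha> :: "real \<Rightarrow> 'a"
  assumes "AE z in lborel. \<alpha> (- z) = \<alpha> z"
  shows "AE p in lborel2. \<alpha> (fst p - snd p) = \<alpha> (snd p - fst p)"
proof -
  obtain N where N: "N \<in> null_sets lborel" "{z \<in> space lborel. \<alpha> (- z) \<noteq> \<alpha> z} \<subseteq> N"
    using assms by (elim AE_E3) blast
  have [measurable]: "N \<in> sets borel" using N by auto
  define S where "S = {p \<in> space lborel2. snd p - fst p \<in> N}"
  have S: "S \<in> sets lborel2" unfolding S_def by measurable
  have "emeasure lborel2 S = (\<integral>\<^sup>+x. \<integral>\<^sup>+y. indicator N (y - x) \<partial>lborel \<partial>lborel)"
    by (subst lborel.emeasure_pair_measure[OF S])
      (auto intro!: nn_integral_cong simp: S_def indicator_def space_pair_measure)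
  also have "\<dots> = (\<integral>\<^sup>+x. emeasure lborel N \<partial>(lborel :: real measure))"
    using nn_integral_real_affine[of "indicator N" 1 "- _"] by simp
  also have "\<dots> = (0::ennreal)" using N by auto
  finally have "S \<in> null_sets lborel2" using S by auto
  then show ?thesis
    by (rule AE_I') (use N in \<open>auto simp: S_def space_pair_measure\<close>)
qed

lemma nn_integral_translation_kernel:
  fixes \<alpha> g :: "real \<Rightarrow> real"
  assumes [measurable]: "\<alpha> \<in> borel_measurable borel" "g \<in> borel_measurable borel"
  shows "(\<integral>\<^sup>+p. ennreal (\<bar>\<alpha> (snd p - fst p)\<bar> * \<bar>g (snd p)\<bar>) \<partial>lborel2)
           = (\<integral>\<^sup>+x. ennreal \<bar>\<alpha> x\<bar> \<partial>lborel) * (\<integral>\<^sup>+x. ennreal \<bar>g x\<bar> \<partial>lborel)"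
    and "(\<integral>\<^sup>+p. ennreal (\<bar>\<alpha> (snd p - fst p)\<bar> * \<bar>g (fst p)\<bar>) \<partial>lborel2)
           = (\<integral>\<^sup>+x. ennreal \<bar>\<alpha> x\<bar> \<partial>lborel) * (\<integral>\<^sup>+x. ennreal \<bar>g x\<bar> \<partial>lborel)"
proof -
  let ?A = "\<integral>\<^sup>+x. ennreal \<bar>\<alpha> x\<bar> \<partial>lborel"
  have shift_x: "(\<integral>\<^sup>+x. ennreal \<bar>\<alpha> (y - x)\<bar> \<partial>lborel) = ?A" for y
    using nn_integral_real_affine[of "\<lambda>x. ennreal \<bar>\<alpha> x\<bar>" "-1" y] by simp
  have shift_y: "(\<integral>\<^sup>+y. ennreal \<bar>\<alpha> (y - x)\<bar> \<partial>lborel) = ?A" for x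
    using nn_integral_real_affine[of "\<lambda>x. ennreal \<bar>\<alpha> x\<bar>" 1 "-x"] by simp
  have "(\<integral>\<^sup>+p. ennreal (\<bar>\<alpha> (snd p - fst p)\<bar> * \<bar>g (snd p)\<bar>) \<partial>lborel2)
      = (\<integral>\<^sup>+y. ennreal \<bar>g y\<bar> * (\<integral>\<^sup>+x. ennreal \<bar>\<alpha> (y - x)\<bar> \<partial>lborel) \<partial>lborel)"
    by (subst lborel_pair.nn_integral_snd[symmetric])
      (auto intro!: nn_integral_cong simp: ennreal_mult' mult.commute simp flip: nn_integral_cmult)
  also have "\<dots> = ?A * (\<integral>\<^sup>+x. ennreal \<bar>g x\<bar> \<partial>lborel)"
    by (simp add: shift_x nn_integral_multc mult.commute)
  finally show "(\<integral>\<^sup>+p. ennreal (\<bar>\<alpha> (snd p - fst p)\<bar> * \<bar>g (snd p)\<bar>) \<partial>lborel2)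
      = ?A * (\<integral>\<^sup>+x. ennreal \<bar>g x\<bar> \<partial>lborel)" .
  have "(\<integral>\<^sup>+p. ennreal (\<bar>\<alpha> (snd p - fst p)\<bar> * \<bar>g (fst p)\<bar>) \<partial>lborel2)
      = (\<integral>\<^sup>+x. ennreal \<bar>g x\<bar> * (\<integral>\<^sup>+y. ennreal \<bar>\<alpha> (y - x)\<bar> \<partial>lborel) \<partial>lborel)"
    by (subst lborel.nn_integral_fst[symmetric])
      (auto intro!: nn_integral_cong simp: ennreal_mult' mult.commute simp flip: nn_integral_cmult)
  also have "\<dots> = ?A * (\<integral>\<^sup>+x. ennreal \<bar>g x\<bar> \<partial>lborel)"
    by (simp add: shift_y nn_integral_multc mult.commute)
  finally show "(\<integral>\<^sup>+p. ennreal (\<bar>\<alpha> (snd p - fst p)\<bar> * \<bar>g (fst p)\<bar>) \<partial>lborel2)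
      = ?A * (\<integral>\<^sup>+x. ennreal \<bar>g x\<bar> \<partial>lborel)" .
qed

lemma integrable_translation_kernel:
  fixes \<alpha> g :: "real \<Rightarrow> real"
  assumes \<alpha>: "integrable lborel \<alpha>" and g: "integrable lborel g"
  shows "integrable lborel2 (\<lambda>p. \<bar>\<alpha> (snd p - fst p)\<bar> * (\<bar>g (snd p)\<bar> + \<bar>g (fst p)\<bar>))"
    and "(\<integral>p. \<bar>\<alpha> (snd p - fst p)\<bar> * (\<bar>g (snd p)\<bar> + \<bar>g (fst p)\<bar>) \<partial>lborel2)
           = 2 * (LINT x|lborel. \<bar>\<alpha> x\<bar>) * (LINT x|lborel. \<bar>g x\<bar>)"
proof -
  have meas[measurable]: "\<alpha> \<in> borel_measurable borel" "g \<in> borel_measurable borel"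
    using \<alpha> g by (auto dest: borel_measurable_integrable)
  have nn: "(\<integral>\<^sup>+x. ennreal \<bar>f x\<bar> \<partial>lborel) = ennreal (LINT x|lborel. \<bar>f x\<bar>)"
    if "integrable lborel f" for f :: "real \<Rightarrow> real"
    using that by (intro nn_integral_eq_integral) auto
  have "(\<integral>\<^sup>+p. ennreal (\<bar>\<alpha> (snd p - fst p)\<bar> * (\<bar>g (snd p)\<bar> + \<bar>g (fst p)\<bar>)) \<partial>lborel2)
      = (\<integral>\<^sup>+p. ennreal (\<bar>\<alpha> (snd p - fst p)\<bar> * \<bar>g (snd p)\<bar>) \<partial>lborel2)
        + (\<integral>\<^sup>+p. ennreal (\<bar>\<alpha> (snd p - fst p)\<bar> * \<bar>g (fst p)\<bar>) \<partial>lborel2)"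
    by (subst nn_integral_add[symmetric]) (auto simp: distrib_left)
  also have "\<dots> = ennreal (2 * (LINT x|lborel. \<bar>\<alpha> x\<bar>) * (LINT x|lborel. \<bar>g x\<bar>))"
    unfolding nn_integral_translation_kernel[OF meas] nn[OF \<alpha>] nn[OF g]
    by (simp add: ennreal_mult' mult.assoc flip: mult_2)
  finally have eq: "(\<integral>\<^sup>+p. ennreal (\<bar>\<alpha> (snd p - fst p)\<bar> * (\<bar>g (snd p)\<bar> + \<bar>g (fst p)\<bar>)) \<partial>lborel2)
      = ennreal (2 * (LINT x|lborel. \<bar>\<alpha> x\<bar>) * (LINT x|lborel. \<bar>g x\<bar>))" .
  show int: "integrable lborel2 (\<lambda>p. \<bar>\<alpha> (snd p - fst p)\<bar> * (\<bar>g (snd p)\<bar> + \<bar>g (fst p)\<bar>))"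
    by (rule integrableI_nn_integral_finite[OF _ _ eq]) auto
  show "(\<integral>p. \<bar>\<alpha> (snd p - fst p)\<bar> * (\<bar>g (snd p)\<bar> + \<bar>g (fst p)\<bar>) \<partial>lborel2)
           = 2 * (LINT x|lborel. \<bar>\<alpha> x\<bar>) * (LINT x|lborel. \<bar>g x\<bar>)"
    using nn_integral_eq_integral[OF int] eq by simp
qed

lemma integrable_dominated_by_translation_kernel:
  fixes \<alpha> g :: "real \<Rightarrow> real" and F :: "real \<times> real \<Rightarrow> real"
  assumes \<alpha>: "integrable lborel \<alpha>" and g: "integrable lborel g"
    and F: "F \<in> borel_measurable lborel2"
    and bound: "AE p in lborel2. \<bar>F p\<bar> \<le> \<bar>\<alpha> (snd p - fst p)\<bar> * (\<bar>g (snd p)\<bar> + \<bar>g (fst p)\<bar>)"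
  shows "integrable lborel2 F"
    and "\<bar>integral\<^sup>L lborel2 F\<bar> \<le> 2 * (LINT x|lborel. \<bar>\<alpha> x\<bar>) * (LINT x|lborel. \<bar>g x\<bar>)"
proof -
  note K = integrable_translation_kernel[OF \<alpha> g]
  show int: "integrable lborel2 F"
    using bound by (intro Bochner_Integration.integrable_bound[OF K(1) F]) (auto elim!: eventually_mono)
  have "\<bar>integral\<^sup>L lborel2 F\<bar> \<le> (\<integral>p. \<bar>F p\<bar> \<partial>lborel2)"
    by (rule integral_abs_bound)
  also have "\<dots> \<le> (\<integral>p. \<bar>\<alpha> (snd p - fst p)\<bar> * (\<bar>g (snd p)\<bar> + \<bar>g (fst p)\<bar>) \<partial>lborel2)"
    using int K(1) bound by (intro integral_mono_AE) auto
  finally show "\<bar>integral\<^sup>L lborel2 F\<bar> \<le> 2 * (LINT x|lborel. \<bar>\<alpha> x\<bar>) * (LINT x|lborel. \<bar>g x\<bar>)"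
    by (simp only: K(2))
qed

section \<open>Integrable, essentially bounded functions\<close>

lemma integrable_mult_AE_bounded:
  fixes f g :: "'a \<Rightarrow> real"
  assumes f: "f \<in> borel_measurable M" and bound: "AE x in M. \<bar>f x\<bar> \<le> C" and g: "integrable M g"
  shows "integrable M (\<lambda>x. f x * g x)" and "\<bar>\<integral>x. f x * g x \<partial>M\<bar> \<le> C * (\<integral>x. \<bar>g x\<bar> \<partial>M)"
proof -
  have dom: "AE x in M. \<bar>f x * g x\<bar> \<le> C * \<bar>g x\<bar>"
    using bound by eventually_elim (simp add: abs_mult mult_right_mono)
  show int: "integrable M (\<lambda>x. f x * g x)"
    by (rule Bochner_Integration.integrable_bound[where f = "\<lambda>x. C * \<bar>g x\<bar>"])
      (use dom g f in \<open>auto elim!: eventually_mono\<close>)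
  have "\<bar>\<integral>x. f x * g x \<partial>M\<bar> \<le> (\<integral>x. \<bar>f x * g x\<bar> \<partial>M)"
    by (rule integral_abs_bound)
  also have "\<dots> \<le> (\<integral>x. C * \<bar>g x\<bar> \<partial>M)"
    using int g dom by (intro integral_mono_AE) auto
  finally show "\<bar>\<integral>x. f x * g x \<partial>M\<bar> \<le> C * (\<integral>x. \<bar>g x\<bar> \<partial>M)" by simp
qed

lemma esssup_abs_nonneg: "0 \<le> esssup lborel (\<lambda>x. ereal \<bar>(f :: real \<Rightarrow> real) x\<bar>)"
proof -
  have "esssup lborel (\<lambda>x::real. ereal 0) \<le> esssup lborel (\<lambda>x. ereal \<bar>f x\<bar>)"
    by (rule esssup_mono) auto
  then show ?thesis by (subst (asm) esssup_const) (auto simp: zero_ereal_def)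
qed

lemma Xnorm_le_imp:
  fixes f :: "real \<Rightarrow> real"
  assumes "Xnorm f \<le> ereal e"
  shows "AE x in lborel. \<bar>f x\<bar> \<le> e" and "(\<integral>\<^sup>+x. ennreal \<bar>f x\<bar> \<partial>lborel) \<le> ennreal e"
proof -
  let ?L1 = "enn2ereal (\<integral>\<^sup>+x. ennreal \<bar>f x\<bar> \<partial>lborel)"
  let ?Linf = "esssup lborel (\<lambda>x. ereal \<bar>f x\<bar>)"
  have "?L1 + ?Linf \<le> ereal e" using assms unfolding Xnorm_def .
  moreover have "0 \<le> ?L1" "0 \<le> ?Linf" by (simp_all add: esssup_abs_nonneg)
  ultimately have L1: "?L1 \<le> ereal e" and Linf: "?Linf \<le> ereal e"
    by (metis add_increasing2 order_trans order_refl, metis add_increasing order_trans order_refl)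
  show "AE x in lborel. \<bar>f x\<bar> \<le> e"
    using esssup_AE[of "\<lambda>x. ereal \<bar>f x\<bar>" lborel] Linf
    by (auto elim!: eventually_mono) (metis order_trans ereal_less_eq(3))
  show "(\<integral>\<^sup>+x. ennreal \<bar>f x\<bar> \<partial>lborel) \<le> ennreal e"
    using e2ennreal_mono[OF L1] by simp
qed

lemma inX_AE_bounded:
  assumes "inX f"
  obtains M where "0 \<le> M" "AE x in lborel. \<bar>f x\<bar> \<le> M"
proof -
  let ?Linf = "esssup lborel (\<lambda>x. ereal \<bar>f x\<bar>)"
  obtain M where M: "?Linf = ereal M"
    using assms esssup_abs_nonneg[of f] by (cases ?Linf) (auto simp: inX_def)
  show ?thesis
  proof
    show "0 \<le> M" using esssup_abs_nonneg[of f] M by simp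
    show "AE x in lborel. \<bar>f x\<bar> \<le> M"
      using esssup_AE[of "\<lambda>x. ereal \<bar>f x\<bar>" lborel] M by (auto elim!: eventually_mono)
  qed
qed

lemma inX_AE_bounded_lborel2:
  assumes "inX f"
  obtains M where "0 \<le> M" "AE p in lborel2. \<bar>f (fst p)\<bar> \<le> M \<and> \<bar>f (snd p)\<bar> \<le> M"
proof -
  obtain M where "0 \<le> M" "AE x in lborel. \<bar>f x\<bar> \<le> M"
    using assms by (rule inX_AE_bounded)
  with that show ?thesis by (blast dest: AE_lborel2_fst_snd)
qed

lemma integrable_mult_inX:
  assumes f: "inX f" and g: "integrable lborel g"
  shows "integrable lborel (\<lambda>x. f x * g x)"
proof -
  obtain M where "AE x in lborel. \<bar>f x\<bar> \<le> M" using f by (rule inX_AE_bounded)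
  with f g show ?thesis
    unfolding inX_def by (blast intro: integrable_mult_AE_bounded(1))
qed

lemma tendsto_Xnorm_zero_imp:
  fixes g :: "'a \<Rightarrow> real \<Rightarrow> real"
  assumes lim: "((\<lambda>h. Xnorm (g h)) \<longlongrightarrow> 0) F"
    and meas: "\<forall>\<^sub>F h in F. g h \<in> borel_measurable lborel"
  shows "((\<lambda>h. LINT x|lborel. \<bar>g h x\<bar>) \<longlongrightarrow> 0) F"
    and "\<forall>\<^sub>F h in F. integrable lborel (g h) \<and> (AE x in lborel. \<bar>g h x\<bar> \<le> 1)"
proof -
  have small: "\<forall>\<^sub>F h in F. integrable lborel (g h) \<and> (AE x in lborel. \<bar>g h x\<bar> \<le> e)
                 \<and> (LINT x|lborel. \<bar>g h x\<bar>) \<le> e" if "0 < e" for e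
  proof -
    have "\<forall>\<^sub>F h in F. Xnorm (g h) < ereal e"
      using order_tendstoD(2)[OF lim, of "ereal e"] that by simp
    then show ?thesis using meas
    proof eventually_elim
      case (elim h)
      then have le: "Xnorm (g h) \<le> ereal e" by simp
      note nn = Xnorm_le_imp(2)[OF le]
      have int: "integrable lborel (g h)"
        using elim nn by (intro integrableI_bounded) (auto intro: le_less_trans)
      then have "ennreal (LINT x|lborel. \<bar>g h x\<bar>) \<le> ennreal e"
        using nn nn_integral_eq_integral[of lborel "\<lambda>x. \<bar>g h x\<bar>"] by simp
      then show ?case using int Xnorm_le_imp(1)[OF le] \<open>0 < e\<close> by simp
    qed
  qed
  show "((\<lambda>h. LINT x|lborel. \<bar>g h x\<bar>) \<longlongrightarrow> 0) F"
  proof (rule tendstoI)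
    fix e :: real assume "0 < e"
    show "\<forall>\<^sub>F h in F. dist (LINT x|lborel. \<bar>g h x\<bar>) 0 < e"
      using small[of "e/2"] \<open>0 < e\<close> by (auto elim!: eventually_mono)
  qed
  show "\<forall>\<^sub>F h in F. integrable lborel (g h) \<and> (AE x in lborel. \<bar>g h x\<bar> \<le> 1)"
    using small[of 1] by (auto elim!: eventually_mono)
qed

lemma X_difference_quotient_convergence:
  fixes v q :: "real \<Rightarrow> real" and v' :: "real \<Rightarrow> real \<Rightarrow> real"
  assumes v: "inX v" and q: "inX q" and v': "\<forall>\<^sub>F h in F. inX (v' h)"
    and lim: "((\<lambda>h. Xnorm (\<lambda>x. (v' h x - v x) / h - q x)) \<longlongrightarrow> 0) F"
  shows "((\<lambda>h. LINT x|lborel. \<bar>(v' h x - v x) / h - q x\<bar>) \<longlongrightarrow> 0) F"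
    and "\<forall>\<^sub>F h in F. integrable lborel (\<lambda>x. (v' h x - v x) / h - q x)
                    \<and> (AE x in lborel. \<bar>(v' h x - v x) / h - q x\<bar> \<le> 1)"
proof -
  have "\<forall>\<^sub>F h in F. (\<lambda>x. (v' h x - v x) / h - q x) \<in> borel_measurable lborel"
    using v'
  proof eventually_elim
    case (elim h)
    with v q have [measurable]: "v' h \<in> borel_measurable borel" "v \<in> borel_measurable borel"
      "q \<in> borel_measurable borel" by (simp_all add: inX_def)
    show ?case by measurable
  qed
  with lim show "((\<lambda>h. LINT x|lborel. \<bar>(v' h x - v x) / h - q x\<bar>) \<longlongrightarrow> 0) F"
    and "\<forall>\<^sub>F h in F. integrable lborel (\<lambda>x. (v' h x - v x) / h - q x)
                    \<and> (AE x in lborel. \<bar>(v' h x - v x) / h - q x\<bar> \<le> 1)"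
    by (rule tendsto_Xnorm_zero_imp)+
qed

section \<open>The potential W\<close>

lemma Wpot_has_real_derivative:
  assumes w: "continuous_on UNIV w"
  shows "(Wpot w has_real_derivative w x) (at x)"
proof -
  let ?a = "- \<bar>x\<bar> - 1" and ?b = "\<bar>x\<bar> + 1"
  have "((\<lambda>y. LBINT t=0..y. w t) has_vector_derivative w x) (at x within {?a..?b})"
    using interval_integral_FTC2[of ?a 0 ?b w x] continuous_on_subset[OF w]
    by (auto simp: zero_ereal_def)
  then have "((\<lambda>y. LBINT t=0..y. w t) has_vector_derivative w x) (at x within {?a<..<?b})"
    by (rule has_vector_derivative_within_subset) auto
  then have "((\<lambda>y. LBINT t=0..y. w t) has_vector_derivative w x) (at x)"
    by (subst (asm) has_vector_derivative_within_open) auto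
  then show ?thesis
    by (simp add: Wpot_def[abs_def] has_real_derivative_iff_has_vector_derivative)
qed

lemma borel_measurable_Wpot:
  "continuous_on UNIV w \<Longrightarrow> Wpot w \<in> borel_measurable borel"
  using Wpot_has_real_derivative
  by (meson DERIV_isCont borel_measurable_continuous_onI continuous_at_imp_continuous_on)

lemma Wpot_mean_value:
  assumes w: "continuous_on UNIV w"
  obtains z where "min a b \<le> z" "z \<le> max a b" "Wpot w b - Wpot w a = (b - a) * w z"
proof (cases a b rule: linorder_cases)
  case less
  then obtain z where "a < z" "z < b" "Wpot w b - Wpot w a = (b - a) * w z"
    using MVT2[OF less] Wpot_has_real_derivative[OF w] by blast
  then show ?thesis using that[of z] less by auto
next
  case equal
  then show ?thesis using that by auto
next
  case greater
  then obtain z where "b < z" "z < a" "Wpot w a - Wpot w b = (a - b) * w z"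
    using MVT2[OF greater] Wpot_has_real_derivative[OF w] by blast
  then show ?thesis using that[of z] by (auto simp: algebra_simps)
qed

lemma Wpot_bound:
  fixes w :: "real \<Rightarrow> real"
  assumes w: "continuous_on UNIV w"
  obtains C where "0 \<le> C" "\<And>a. \<bar>a\<bar> \<le> R \<Longrightarrow> \<bar>w a\<bar> \<le> C \<and> \<bar>Wpot w a\<bar> \<le> C * \<bar>a\<bar>"
proof -
  have "bounded (w ` cball 0 R)"
    by (intro compact_imp_bounded compact_continuous_image continuous_on_subset[OF w]) auto
  then obtain C where C: "0 \<le> C" "\<And>a. \<bar>a\<bar> \<le> R \<Longrightarrow> \<bar>w a\<bar> \<le> C"
    unfolding bounded_real by (metis abs_ge_zero image_eqI mem_cball_0 order_trans real_norm_def)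
  have "\<bar>Wpot w a\<bar> \<le> C * \<bar>a\<bar>" if a: "\<bar>a\<bar> \<le> R" for a
  proof -
    obtain z where z: "min 0 a \<le> z" "z \<le> max 0 a" "Wpot w a - Wpot w 0 = (a - 0) * w z"
      by (rule Wpot_mean_value[OF w])
    have "\<bar>w z\<bar> \<le> C" using z a by (intro C(2)) (auto simp: min_def max_def split: if_splits)
    moreover have "Wpot w a = a * w z" using z by (simp add: Wpot_def zero_ereal_def)
    ultimately show ?thesis by (metis abs_ge_zero abs_mult mult.commute mult_left_mono)
  qed
  then show ?thesis using that C by blast
qed

lemma Wpot_uniform_linearization:
  fixes w :: "real \<Rightarrow> real"
  assumes w: "continuous_on UNIV w" and e: "0 < e"
  obtains \<delta> where "0 < \<delta>" "\<And>a b. \<bar>a\<bar> \<le> R \<Longrightarrow> \<bar>b\<bar> \<le> R \<Longrightarrow> \<bar>b - a\<bar> \<le> \<delta> \<Longrightarrow>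
            \<bar>Wpot w b - Wpot w a - w a * (b - a)\<bar> \<le> e * \<bar>b - a\<bar>"
proof -
  have "uniformly_continuous_on (cball 0 R) w"
    by (intro compact_uniformly_continuous continuous_on_subset[OF w]) auto
  then obtain d where d: "0 < d"
    "\<And>x x'. x \<in> cball 0 R \<Longrightarrow> x' \<in> cball 0 R \<Longrightarrow> dist x' x < d \<Longrightarrow> dist (w x') (w x) < e"
    unfolding uniformly_continuous_on_def using e by metis
  have "\<bar>Wpot w b - Wpot w a - w a * (b - a)\<bar> \<le> e * \<bar>b - a\<bar>"
    if ab: "\<bar>a\<bar> \<le> R" "\<bar>b\<bar> \<le> R" "\<bar>b - a\<bar> \<le> d/2" for a b
  proof -
    obtain z where z: "min a b \<le> z" "z \<le> max a b" "Wpot w b - Wpot w a = (b - a) * w z"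
      by (rule Wpot_mean_value[OF w])
    have "\<bar>w z - w a\<bar> < e"
      using d(2)[of a z] z ab d(1) by (auto simp: dist_real_def min_def max_def split: if_splits)
    then have "\<bar>b - a\<bar> * \<bar>w z - w a\<bar> \<le> \<bar>b - a\<bar> * e"
      by (intro mult_left_mono) auto
    moreover have "Wpot w b - Wpot w a - w a * (b - a) = (b - a) * (w z - w a)"
      using z by (simp add: algebra_simps)
    ultimately show ?thesis by (simp add: abs_mult mult.commute)
  qed
  then show ?thesis using that[of "d/2"] d(1) by auto
qed

lemma Wpot_quotient_pointwise_bound:
  fixes w :: "real \<Rightarrow> real"
  assumes lin: "\<And>a b. \<bar>a\<bar> \<le> R \<Longrightarrow> \<bar>b\<bar> \<le> R \<Longrightarrow> \<bar>b - a\<bar> \<le> \<delta> \<Longrightarrow>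
                  \<bar>Wpot w b - Wpot w a - w a * (b - a)\<bar> \<le> e * \<bar>b - a\<bar>"
    and e: "0 \<le> e" and h: "h \<noteq> 0" and C: "\<bar>w a\<bar> \<le> C" and a: "\<bar>a\<bar> + 1 \<le> R"
    and small: "\<bar>h\<bar> * (\<bar>d1\<bar> + \<bar>d0\<bar> + \<bar>g1\<bar> + \<bar>g0\<bar>) \<le> min 1 \<delta>"
  shows "\<bar>(Wpot w (a + h * (d1 - d0 + (g1 - g0))) - Wpot w a) / h - w a * (g1 - g0)\<bar>
           \<le> (e + C) * (\<bar>d1\<bar> + \<bar>d0\<bar>) + e * (\<bar>g1\<bar> + \<bar>g0\<bar>)"
proof -
  define s where "s = d1 - d0 + (g1 - g0)"
  have s: "\<bar>s\<bar> \<le> \<bar>d1\<bar> + \<bar>d0\<bar> + \<bar>g1\<bar> + \<bar>g0\<bar>" unfolding s_def by linarith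
  then have "\<bar>h * s\<bar> \<le> min 1 \<delta>"
    using small by (simp add: abs_mult) (meson abs_ge_zero mult_left_mono order_trans)
  then have hs: "\<bar>h * s\<bar> \<le> 1" "\<bar>h * s\<bar> \<le> \<delta>" by auto
  have "\<bar>a + h * s\<bar> \<le> R" using abs_triangle_ineq[of a "h * s"] hs(1) a by linarith
  then have "\<bar>Wpot w (a + h * s) - Wpot w a - w a * (h * s)\<bar> \<le> e * \<bar>h * s\<bar>"
    using lin[of a "a + h * s"] a hs(2) by simp
  then have rem: "\<bar>(Wpot w (a + h * s) - Wpot w a) / h - w a * s\<bar> \<le> e * \<bar>s\<bar>"
    using h by (simp add: field_simps abs_mult)
  have "(Wpot w (a + h * s) - Wpot w a) / h - w a * (g1 - g0)
      = ((Wpot w (a + h * s) - Wpot w a) / h - w a * s) + w a * (d1 - d0)"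
    by (simp add: s_def algebra_simps)
  then have "\<bar>(Wpot w (a + h * s) - Wpot w a) / h - w a * (g1 - g0)\<bar>
      \<le> \<bar>(Wpot w (a + h * s) - Wpot w a) / h - w a * s\<bar> + \<bar>w a * (d1 - d0)\<bar>"
    by (simp only: abs_triangle_ineq)
  also have "\<dots> \<le> e * (\<bar>d1\<bar> + \<bar>d0\<bar> + \<bar>g1\<bar> + \<bar>g0\<bar>) + C * (\<bar>d1\<bar> + \<bar>d0\<bar>)"
  proof (rule add_mono)
    show "\<bar>(Wpot w (a + h * s) - Wpot w a) / h - w a * s\<bar> \<le> e * (\<bar>d1\<bar> + \<bar>d0\<bar> + \<bar>g1\<bar> + \<bar>g0\<bar>)"
      using rem s e by (meson mult_left_mono order_trans)
    show "\<bar>w a * (d1 - d0)\<bar> \<le> C * (\<bar>d1\<bar> + \<bar>d0\<bar>)"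
      unfolding abs_mult using C by (intro mult_mono) auto
  qed
  finally show ?thesis
    unfolding s_def by (simp add: algebra_simps)
qed

section \<open>Differentiating the energy\<close>

lemma tendsto_zero_if_eventually_le:
  fixes X A B :: "'a \<Rightarrow> real"
  assumes A: "(A \<longlongrightarrow> 0) F" and B: "(B \<longlongrightarrow> b) F"
    and le: "\<And>e. 0 < e \<Longrightarrow> \<forall>\<^sub>F x in F. \<bar>X x\<bar> \<le> A x + e * B x"
  shows "(X \<longlongrightarrow> 0) F"
proof (rule tendstoI)
  fix e :: real assume "0 < e"
  define K where "K = \<bar>b\<bar> + 1"
  have "0 < K" by (simp add: K_def add_nonneg_pos)
  have "\<forall>\<^sub>F x in F. A x < e / 2" using order_tendstoD(2)[OF A, of "e / 2"] \<open>0 < e\<close> by simp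
  moreover have "\<forall>\<^sub>F x in F. B x < K" using order_tendstoD(2)[OF B, of K] by (simp add: K_def)
  moreover have "\<forall>\<^sub>F x in F. \<bar>X x\<bar> \<le> A x + e / (2 * K) * B x"
    using \<open>0 < e\<close> \<open>0 < K\<close> by (intro le) simp
  ultimately show "\<forall>\<^sub>F x in F. dist (X x) 0 < e"
  proof eventually_elim
    case (elim x)
    have "e / (2 * K) * B x \<le> e / (2 * K) * K"
      using elim(2) \<open>0 < e\<close> \<open>0 < K\<close> by (intro mult_left_mono) auto
    also have "\<dots> = e / 2" using \<open>0 < K\<close> by simp
    finally show ?case using elim(1,3) by (simp only: dist_real_def diff_0_right)
  qed
qed

lemma has_field_derivative_within_if_quotient_tendsto:
  fixes f :: "real \<Rightarrow> real"
  assumes "((\<lambda>h. (f (t + h) - f t) / h) \<longlongrightarrow> D) (at 0 within {h. t + h \<in> S})"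
  shows "(f has_field_derivative D) (at t within S)"
proof -
  have "filterlim (\<lambda>y. y - t) (at 0 within {h. t + h \<in> S}) (at t within S)"
    unfolding filterlim_at
  proof
    show "\<forall>\<^sub>F y in at t within S. y - t \<in> {h. t + h \<in> S} \<and> y - t \<noteq> 0"
      unfolding eventually_at_filter by (auto intro: always_eventually)
    show "((\<lambda>y. y - t) \<longlongrightarrow> 0) (at t within S)"
      using tendsto_diff[OF tendsto_ident_at[of t S] tendsto_const[of t]] by simp
  qed
  from filterlim_compose[OF assms this] show ?thesis
    unfolding has_field_derivative_iff by simp
qed

lemma integral_square_quotient_error:
  fixes v v1 q :: "real \<Rightarrow> real"
  assumes v: "inX v" and v1: "inX v1" and q: "inX q" and h: "h \<noteq> 0"
    and v_bound: "AE x in lborel. \<bar>v x\<bar> \<le> Mv" and q_bound: "0 \<le> Mq" "AE x in lborel. \<bar>q x\<bar> \<le> Mq"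
    and d_bound: "AE x in lborel. \<bar>(v1 x - v x) / h - q x\<bar> \<le> 1"
  shows "\<bar>((LINT x|lborel. (v1 x)\<^sup>2) - (LINT x|lborel. (v x)\<^sup>2)) / h - 2 * (LINT x|lborel. v x * q x)\<bar>
         \<le> 2 * (Mv * (LINT x|lborel. \<bar>(v1 x - v x) / h - q x\<bar>))
           + \<bar>h\<bar> * ((1 + Mq) * ((LINT x|lborel. \<bar>(v1 x - v x) / h - q x\<bar>) + (LINT x|lborel. \<bar>q x\<bar>)))"
proof -
  define D where "D x = (v1 x - v x) / h" for x
  define n where "n = (LINT x|lborel. \<bar>D x - q x\<bar>)"
  have [measurable]: "v \<in> borel_measurable lborel" "v1 \<in> borel_measurable lborel"
    "q \<in> borel_measurable lborel" and int: "integrable lborel v" "integrable lborel v1" "integrable lborel q"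
    using v v1 q by (auto simp: inX_def)
  have int_D: "integrable lborel D" and D_meas: "D \<in> borel_measurable lborel"
    using int unfolding D_def[abs_def] by simp_all
  have "AE x in lborel. \<bar>D x\<bar> \<le> 1 + Mq"
    using d_bound q_bound(2) unfolding D_def by eventually_elim linarith
  note DD = integrable_mult_AE_bounded[OF D_meas this int_D]
  note vd = integrable_mult_AE_bounded[OF _ v_bound, of "\<lambda>x. D x - q x"]
  have sq: "integrable lborel (\<lambda>x. (f x)\<^sup>2)" if "inX f" for f
    using integrable_mult_inX[OF that, of f] that by (simp add: power2_eq_square inX_def)
  have "((LINT x|lborel. (v1 x)\<^sup>2) - (LINT x|lborel. (v x)\<^sup>2)) / h - 2 * (LINT x|lborel. v x * q x)
      = (LINT x|lborel. ((v1 x)\<^sup>2 - (v x)\<^sup>2) / h - 2 * (v x * q x))"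
    using sq[OF v1] sq[OF v] integrable_mult_inX[OF v int(3)] by simp
  also have "\<dots> = (LINT x|lborel. 2 * (v x * (D x - q x)) + h * (D x * D x))"
    using h by (intro Bochner_Integration.integral_cong) (auto simp: D_def field_simps power2_eq_square)
  also have "\<dots> = 2 * (LINT x|lborel. v x * (D x - q x)) + h * (LINT x|lborel. D x * D x)"
    using vd(1) DD(1) int_D int by simp
  finally have eq: "((LINT x|lborel. (v1 x)\<^sup>2) - (LINT x|lborel. (v x)\<^sup>2)) / h - 2 * (LINT x|lborel. v x * q x)
      = 2 * (LINT x|lborel. v x * (D x - q x)) + h * (LINT x|lborel. D x * D x)" .
  have "(LINT x|lborel. \<bar>D x\<bar>) \<le> (LINT x|lborel. \<bar>D x - q x\<bar> + \<bar>q x\<bar>)"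
    by (rule Bochner_Integration.integral_mono) (use int_D int in auto)
  also have "\<dots> = n + (LINT x|lborel. \<bar>q x\<bar>)"
    unfolding n_def using int_D int by (subst Bochner_Integration.integral_add) auto
  finally have "(1 + Mq) * (LINT x|lborel. \<bar>D x\<bar>) \<le> (1 + Mq) * (n + (LINT x|lborel. \<bar>q x\<bar>))"
    by (rule mult_left_mono) (use q_bound(1) in simp)
  with DD(2) have "\<bar>h * (LINT x|lborel. D x * D x)\<bar> \<le> \<bar>h\<bar> * ((1 + Mq) * (n + (LINT x|lborel. \<bar>q x\<bar>)))"
    unfolding abs_mult by (intro mult_left_mono) auto
  moreover have "\<bar>2 * (LINT x|lborel. v x * (D x - q x))\<bar> \<le> 2 * (Mv * n)"
    using vd(2) int_D int by (simp add: n_def)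
  ultimately show ?thesis
    unfolding eq n_def D_def using abs_triangle_ineq by (meson add_mono order_trans)
qed

lemma tendsto_quotient_integral_square:
  fixes v q :: "real \<Rightarrow> real" and v' :: "real \<Rightarrow> real \<Rightarrow> real"
  assumes v: "inX v" and q: "inX q"
    and v': "\<forall>\<^sub>F h in at 0 within S. inX (v' h)"
    and lim: "((\<lambda>h. Xnorm (\<lambda>x. (v' h x - v x) / h - q x)) \<longlongrightarrow> 0) (at 0 within S)"
  shows "((\<lambda>h. ((LINT x|lborel. (v' h x)\<^sup>2) - (LINT x|lborel. (v x)\<^sup>2)) / h)
           \<longlongrightarrow> 2 * (LINT x|lborel. v x * q x)) (at 0 within S)"
proof -
  define n where "n h = (LINT x|lborel. \<bar>(v' h x - v x) / h - q x\<bar>)" for h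
  obtain Mv where Mv: "AE x in lborel. \<bar>v x\<bar> \<le> Mv" using v by (rule inX_AE_bounded)
  obtain Mq where Mq: "0 \<le> Mq" "AE x in lborel. \<bar>q x\<bar> \<le> Mq" using q by (rule inX_AE_bounded)
  note d_conv = X_difference_quotient_convergence[OF v q v' lim, folded n_def]
  have "\<forall>\<^sub>F h in at 0 within S. h \<noteq> 0"
    by (simp add: eventually_at_filter)
  with v' d_conv(2) have bound: "\<forall>\<^sub>F h in at 0 within S.
      \<bar>((LINT x|lborel. (v' h x)\<^sup>2) - (LINT x|lborel. (v x)\<^sup>2)) / h - 2 * (LINT x|lborel. v x * q x)\<bar>
        \<le> 2 * (Mv * n h) + \<bar>h\<bar> * ((1 + Mq) * (n h + (LINT x|lborel. \<bar>q x\<bar>)))"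
    unfolding n_def by eventually_elim (intro integral_square_quotient_error v q Mv Mq; simp)
  have "((\<lambda>h. 2 * (Mv * n h) + \<bar>h\<bar> * ((1 + Mq) * (n h + (LINT x|lborel. \<bar>q x\<bar>))))
      \<longlongrightarrow> 2 * (Mv * 0) + \<bar>0\<bar> * ((1 + Mq) * (0 + (LINT x|lborel. \<bar>q x\<bar>)))) (at 0 within S)"
    by (intro tendsto_intros d_conv(1))
  then have lim0: "((\<lambda>h. 2 * (Mv * n h) + \<bar>h\<bar> * ((1 + Mq) * (n h + (LINT x|lborel. \<bar>q x\<bar>))))
      \<longlongrightarrow> 0) (at 0 within S)"
    by simp
  have "((\<lambda>h. ((LINT x|lborel. (v' h x)\<^sup>2) - (LINT x|lborel. (v x)\<^sup>2)) / h
      - 2 * (LINT x|lborel. v x * q x)) \<longlongrightarrow> 0) (at 0 within S)"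
    by (rule Lim_null_comparison[OF _ lim0]) (use bound in simp)
  then show ?thesis by (rule LIM_zero_cancel)
qed

definition pair_potential :: "(real \<Rightarrow> real) \<Rightarrow> (real \<Rightarrow> real) \<Rightarrow> (real \<Rightarrow> real) \<Rightarrow> real" where
  "pair_potential \<alpha> w f = (LINT p|lborel2. \<alpha> (snd p - fst p) * Wpot w (f (snd p) - f (fst p)))"

lemma integrable_pair_potential:
  fixes \<alpha> w f :: "real \<Rightarrow> real"
  assumes \<alpha>: "integrable lborel \<alpha>" and w: "continuous_on UNIV w" and f: "inX f"
  shows "integrable lborel2 (\<lambda>p. \<alpha> (snd p - fst p) * Wpot w (f (snd p) - f (fst p)))"
proof -
  have [measurable]: "\<alpha> \<in> borel_measurable borel" "f \<in> borel_measurable borel"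
    using \<alpha> f by (auto simp: inX_def dest: borel_measurable_integrable)
  note [measurable] = borel_measurable_Wpot[OF w]
  obtain M where M: "AE p in lborel2. \<bar>f (fst p)\<bar> \<le> M \<and> \<bar>f (snd p)\<bar> \<le> M"
    using f by (rule inX_AE_bounded_lborel2)
  obtain C where C: "0 \<le> C" "\<And>a. \<bar>a\<bar> \<le> 2 * M \<Longrightarrow> \<bar>Wpot w a\<bar> \<le> C * \<bar>a\<bar>"
    using w by (rule Wpot_bound) blast
  show ?thesis
  proof (rule integrable_dominated_by_translation_kernel(1)[OF \<alpha>, where g = "\<lambda>x. C * f x"])
    show "integrable lborel (\<lambda>x. C * f x)" using f by (simp add: inX_def)
    show "(\<lambda>p. \<alpha> (snd p - fst p) * Wpot w (f (snd p) - f (fst p))) \<in> borel_measurable lborel2"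
      by measurable
    show "AE p in lborel2. \<bar>\<alpha> (snd p - fst p) * Wpot w (f (snd p) - f (fst p))\<bar>
            \<le> \<bar>\<alpha> (snd p - fst p)\<bar> * (\<bar>C * f (snd p)\<bar> + \<bar>C * f (fst p)\<bar>)"
      using M
    proof eventually_elim
      case (elim p)
      then have "\<bar>Wpot w (f (snd p) - f (fst p))\<bar> \<le> C * \<bar>f (snd p) - f (fst p)\<bar>"
        by (intro C(2)) auto
      also have "\<dots> \<le> \<bar>C * f (snd p)\<bar> + \<bar>C * f (fst p)\<bar>"
        using C(1) by (simp add: abs_mult flip: distrib_left) (rule mult_left_mono, auto)
      finally show ?case
        unfolding abs_mult by (rule mult_left_mono) simp
    qed
  qed
qed

lemma integrable_pair_force:
  fixes \<alpha> w f g :: "real \<Rightarrow> real"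
  assumes \<alpha>: "integrable lborel \<alpha>" and w: "continuous_on UNIV w" and f: "inX f"
    and g: "integrable lborel g"
  shows "integrable lborel2 (\<lambda>p. \<alpha> (snd p - fst p) * w (f (snd p) - f (fst p)) * g (snd p))"
    and "integrable lborel2 (\<lambda>p. \<alpha> (snd p - fst p) * w (f (snd p) - f (fst p)) * g (fst p))"
proof -
  have [measurable]: "\<alpha> \<in> borel_measurable borel" "f \<in> borel_measurable borel"
    "g \<in> borel_measurable borel" "w \<in> borel_measurable borel"
    using \<alpha> f g w by (auto simp: inX_def dest: borel_measurable_integrable borel_measurable_continuous_onI)
  obtain M where M: "AE p in lborel2. \<bar>f (fst p)\<bar> \<le> M \<and> \<bar>f (snd p)\<bar> \<le> M"
    using f by (rule inX_AE_bounded_lborel2)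
  obtain C where C: "0 \<le> C" "\<And>a. \<bar>a\<bar> \<le> 2 * M \<Longrightarrow> \<bar>w a\<bar> \<le> C"
    using w by (rule Wpot_bound) blast
  have "AE p in lborel2. \<bar>\<alpha> (snd p - fst p) * w (f (snd p) - f (fst p))\<bar> \<le> C * \<bar>\<alpha> (snd p - fst p)\<bar>"
    using M
  proof eventually_elim
    case (elim p)
    then have "\<bar>w (f (snd p) - f (fst p))\<bar> \<le> C" by (intro C(2)) auto
    then show ?case by (metis abs_ge_zero abs_mult mult.commute mult_left_mono)
  qed
  then have dom: "AE p in lborel2. \<bar>\<alpha> (snd p - fst p) * w (f (snd p) - f (fst p)) * g (sel p)\<bar>
                   \<le> \<bar>\<alpha> (snd p - fst p)\<bar> * (\<bar>C * g (snd p)\<bar> + \<bar>C * g (fst p)\<bar>)"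
    if "sel = fst \<or> sel = snd" for sel :: "real \<times> real \<Rightarrow> real"
  proof eventually_elim
    case (elim p)
    have "\<bar>g (sel p)\<bar> \<le> \<bar>g (snd p)\<bar> + \<bar>g (fst p)\<bar>" using that by auto
    with elim have "\<bar>\<alpha> (snd p - fst p) * w (f (snd p) - f (fst p))\<bar> * \<bar>g (sel p)\<bar>
        \<le> (C * \<bar>\<alpha> (snd p - fst p)\<bar>) * (\<bar>g (snd p)\<bar> + \<bar>g (fst p)\<bar>)"
      by (intro mult_mono) auto
    then show ?case using C(1) by (simp add: abs_mult algebra_simps)
  qed
  have gC: "integrable lborel (\<lambda>x. C * g x)" using g by simp
  show "integrable lborel2 (\<lambda>p. \<alpha> (snd p - fst p) * w (f (snd p) - f (fst p)) * g (snd p))"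
    by (rule integrable_dominated_by_translation_kernel(1)[OF \<alpha> gC _ dom[of snd]]) simp_all
  show "integrable lborel2 (\<lambda>p. \<alpha> (snd p - fst p) * w (f (snd p) - f (fst p)) * g (fst p))"
    by (rule integrable_dominated_by_translation_kernel(1)[OF \<alpha> gC _ dom[of fst]]) simp_all
qed

lemma pair_force_integral_antisymmetric:
  fixes \<alpha> w f g :: "real \<Rightarrow> real"
  assumes \<alpha>: "integrable lborel \<alpha>" and \<alpha>_even: "AE z in lborel. \<alpha> (- z) = \<alpha> z"
    and w: "continuous_on UNIV w" and w_odd: "\<And>z. w (- z) = - w z"
    and f: "inX f" and g: "integrable lborel g"
  shows "(LINT p|lborel2. \<alpha> (snd p - fst p) * w (f (snd p) - f (fst p)) * (g (snd p) - g (fst p)))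
           = - 2 * (LINT x|lborel. g x * (LINT y|lborel. \<alpha> (y - x) * w (f y - f x)))"
proof -
  have [measurable]: "\<alpha> \<in> borel_measurable borel" "f \<in> borel_measurable borel"
    "g \<in> borel_measurable borel" "w \<in> borel_measurable borel"
    using \<alpha> f g w by (auto simp: inX_def dest: borel_measurable_integrable borel_measurable_continuous_onI)
  note int = integrable_pair_force[OF \<alpha> w f g]
  have "(LINT p|lborel2. \<alpha> (snd p - fst p) * w (f (snd p) - f (fst p)) * g (snd p))
      = (\<integral>(x, y). \<alpha> (x - y) * w (f x - f y) * g x \<partial>lborel2)"
    by (subst lborel_pair.integral_product_swap[symmetric]) (auto simp: case_prod_beta)
  also have "\<dots> = (LINT p|lborel2. - (\<alpha> (snd p - fst p) * w (f (snd p) - f (fst p)) * g (fst p)))"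
    using AE_lborel2_even[OF \<alpha>_even]
  proof (intro integral_cong_AE; measurable?; eventually_elim)
    case (elim p)
    then show ?case using w_odd[of "f (snd p) - f (fst p)"] by (simp add: case_prod_beta)
  qed
  finally have swap: "(LINT p|lborel2. \<alpha> (snd p - fst p) * w (f (snd p) - f (fst p)) * g (snd p))
      = - (LINT p|lborel2. \<alpha> (snd p - fst p) * w (f (snd p) - f (fst p)) * g (fst p))"
    by simp
  have "(LINT p|lborel2. \<alpha> (snd p - fst p) * w (f (snd p) - f (fst p)) * g (fst p))
      = (LINT x|lborel. LINT y|lborel. \<alpha> (y - x) * w (f y - f x) * g x)"
    using lborel_pair.integral_fst'[OF int(2)] by simp
  also have "\<dots> = (LINT x|lborel. g x * (LINT y|lborel. \<alpha> (y - x) * w (f y - f x)))"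
    by (simp add: mult.commute)
  finally show ?thesis
    unfolding right_diff_distrib using int by (simp add: swap)
qed

lemma pair_potential_quotient_eq:
  fixes \<alpha> w f f1 g :: "real \<Rightarrow> real"
  assumes \<alpha>: "integrable lborel \<alpha>" and w: "continuous_on UNIV w"
    and f: "inX f" and f1: "inX f1" and g: "integrable lborel g" and h: "h \<noteq> 0"
  defines "d \<equiv> \<lambda>x. (f1 x - f x) / h - g x"
  shows "(pair_potential \<alpha> w f1 - pair_potential \<alpha> w f) / h
           - (LINT p|lborel2. \<alpha> (snd p - fst p) * w (f (snd p) - f (fst p)) * (g (snd p) - g (fst p)))
       = (LINT p|lborel2. \<alpha> (snd p - fst p) *
            ((Wpot w (f (snd p) - f (fst p) + h * (d (snd p) - d (fst p) + (g (snd p) - g (fst p))))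
              - Wpot w (f (snd p) - f (fst p))) / h - w (f (snd p) - f (fst p)) * (g (snd p) - g (fst p))))"
proof -
  have shift: "f y - f x + h * (d y - d x + (g y - g x)) = f1 y - f1 x" for x y
    using h by (simp add: d_def field_simps)
  have "(pair_potential \<alpha> w f1 - pair_potential \<alpha> w f) / h
           - (LINT p|lborel2. \<alpha> (snd p - fst p) * w (f (snd p) - f (fst p)) * (g (snd p) - g (fst p)))
      = (LINT p|lborel2. (\<alpha> (snd p - fst p) * Wpot w (f1 (snd p) - f1 (fst p))
          - \<alpha> (snd p - fst p) * Wpot w (f (snd p) - f (fst p))) / h
        - (\<alpha> (snd p - fst p) * w (f (snd p) - f (fst p)) * g (snd p)
          - \<alpha> (snd p - fst p) * w (f (snd p) - f (fst p)) * g (fst p)))"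
    using integrable_pair_potential[OF \<alpha> w f1] integrable_pair_potential[OF \<alpha> w f]
      integrable_pair_force[OF \<alpha> w f g]
    unfolding pair_potential_def right_diff_distrib by simp
  also have "\<dots> = (LINT p|lborel2. \<alpha> (snd p - fst p) *
            ((Wpot w (f (snd p) - f (fst p) + h * (d (snd p) - d (fst p) + (g (snd p) - g (fst p))))
              - Wpot w (f (snd p) - f (fst p))) / h - w (f (snd p) - f (fst p)) * (g (snd p) - g (fst p))))"
    unfolding shift by (rule Bochner_Integration.integral_cong) (simp_all add: algebra_simps diff_divide_distrib)
  finally show ?thesis .
qed

lemma pair_potential_quotient_error:
  fixes \<alpha> w f f1 g :: "real \<Rightarrow> real"
  assumes \<alpha>: "integrable lborel \<alpha>" and w: "continuous_on UNIV w"
    and f: "inX f" and f1: "inX f1" and g: "integrable lborel g"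
    and f_bound: "AE p in lborel2. \<bar>f (fst p)\<bar> \<le> M \<and> \<bar>f (snd p)\<bar> \<le> M"
    and g_bound: "AE p in lborel2. \<bar>g (fst p)\<bar> \<le> G \<and> \<bar>g (snd p)\<bar> \<le> G"
    and d_bound: "AE x in lborel. \<bar>(f1 x - f x) / h - g x\<bar> \<le> 1"
    and C: "0 \<le> C" "\<And>a. \<bar>a\<bar> \<le> 2 * M \<Longrightarrow> \<bar>w a\<bar> \<le> C"
    and lin: "\<And>a b. \<bar>a\<bar> \<le> 2 * M + 1 \<Longrightarrow> \<bar>b\<bar> \<le> 2 * M + 1 \<Longrightarrow> \<bar>b - a\<bar> \<le> \<delta> \<Longrightarrow>
                  \<bar>Wpot w b - Wpot w a - w a * (b - a)\<bar> \<le> e * \<bar>b - a\<bar>"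
    and e: "0 \<le> e" and h: "h \<noteq> 0" and small: "\<bar>h\<bar> * (2 + 2 * G) \<le> min 1 \<delta>"
  shows "\<bar>(pair_potential \<alpha> w f1 - pair_potential \<alpha> w f) / h
            - (LINT p|lborel2. \<alpha> (snd p - fst p) * w (f (snd p) - f (fst p)) * (g (snd p) - g (fst p)))\<bar>
         \<le> 2 * (LINT x|lborel. \<bar>\<alpha> x\<bar>)
             * ((e + C) * (LINT x|lborel. \<bar>(f1 x - f x) / h - g x\<bar>) + e * (LINT x|lborel. \<bar>g x\<bar>))"
proof -
  define d where "d x = (f1 x - f x) / h - g x" for x
  have [measurable]: "\<alpha> \<in> borel_measurable borel" "f \<in> borel_measurable borel"
    "g \<in> borel_measurable borel" "w \<in> borel_measurable borel"
    and int_d: "integrable lborel d"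
    using \<alpha> f f1 g w
    by (auto simp: inX_def d_def[abs_def] dest: borel_measurable_integrable borel_measurable_continuous_onI)
  note [measurable] = borel_measurable_integrable[OF int_d] borel_measurable_Wpot[OF w]
  define k where "k x = (e + C) * \<bar>d x\<bar> + e * \<bar>g x\<bar>" for x
  have k_abs: "\<bar>k x\<bar> = k x" for x using e C(1) by (simp add: k_def)
  have "integrable lborel k" using int_d g by (simp add: k_def[abs_def])
  then have "\<bar>LINT p|lborel2. \<alpha> (snd p - fst p) *
            ((Wpot w (f (snd p) - f (fst p) + h * (d (snd p) - d (fst p) + (g (snd p) - g (fst p))))
              - Wpot w (f (snd p) - f (fst p))) / h - w (f (snd p) - f (fst p)) * (g (snd p) - g (fst p)))\<bar>
         \<le> 2 * (LINT x|lborel. \<bar>\<alpha> x\<bar>) * (LINT x|lborel. \<bar>k x\<bar>)"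
  proof (rule integrable_dominated_by_translation_kernel(2)[OF \<alpha>])
    show "AE p in lborel2. \<bar>\<alpha> (snd p - fst p) *
            ((Wpot w (f (snd p) - f (fst p) + h * (d (snd p) - d (fst p) + (g (snd p) - g (fst p))))
              - Wpot w (f (snd p) - f (fst p))) / h - w (f (snd p) - f (fst p)) * (g (snd p) - g (fst p)))\<bar>
          \<le> \<bar>\<alpha> (snd p - fst p)\<bar> * (\<bar>k (snd p)\<bar> + \<bar>k (fst p)\<bar>)"
      using f_bound g_bound AE_lborel2_fst_snd[OF d_bound[folded d_def]]
    proof eventually_elim
      case (elim p)
      have "\<bar>(Wpot w (f (snd p) - f (fst p) + h * (d (snd p) - d (fst p) + (g (snd p) - g (fst p))))
              - Wpot w (f (snd p) - f (fst p))) / h - w (f (snd p) - f (fst p)) * (g (snd p) - g (fst p))\<bar>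
          \<le> (e + C) * (\<bar>d (snd p)\<bar> + \<bar>d (fst p)\<bar>) + e * (\<bar>g (snd p)\<bar> + \<bar>g (fst p)\<bar>)"
      proof (rule Wpot_quotient_pointwise_bound[OF lin e h])
        show "\<bar>w (f (snd p) - f (fst p))\<bar> \<le> C" using elim by (intro C(2)) auto
        show "\<bar>f (snd p) - f (fst p)\<bar> + 1 \<le> 2 * M + 1" using elim by auto
        have "\<bar>d (snd p)\<bar> + \<bar>d (fst p)\<bar> + \<bar>g (snd p)\<bar> + \<bar>g (fst p)\<bar> \<le> 2 + 2 * G"
          using elim by auto
        then show "\<bar>h\<bar> * (\<bar>d (snd p)\<bar> + \<bar>d (fst p)\<bar> + \<bar>g (snd p)\<bar> + \<bar>g (fst p)\<bar>) \<le> min 1 \<delta>"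
          using small by (meson abs_ge_zero mult_left_mono order_trans)
      qed auto
      then show ?case
        unfolding abs_mult k_abs by (intro mult_left_mono) (auto simp: k_def algebra_simps)
    qed
  qed measurable
  also have "(LINT x|lborel. \<bar>k x\<bar>) = (e + C) * (LINT x|lborel. \<bar>d x\<bar>) + e * (LINT x|lborel. \<bar>g x\<bar>)"
    unfolding k_abs using int_d g by (simp add: k_def)
  finally show ?thesis
    unfolding pair_potential_quotient_eq[OF \<alpha> w f f1 g h] d_def .
qed

lemma tendsto_quotient_pair_potential:
  fixes \<alpha> w f g :: "real \<Rightarrow> real" and f' :: "real \<Rightarrow> real \<Rightarrow> real"
  assumes \<alpha>: "integrable lborel \<alpha>" and w: "continuous_on UNIV w"
    and f: "inX f" and g: "inX g"
    and f': "\<forall>\<^sub>F h in at 0 within S. inX (f' h)"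
    and lim: "((\<lambda>h. Xnorm (\<lambda>x. (f' h x - f x) / h - g x)) \<longlongrightarrow> 0) (at 0 within S)"
  shows "((\<lambda>h. (pair_potential \<alpha> w (f' h) - pair_potential \<alpha> w f) / h)
           \<longlongrightarrow> (LINT p|lborel2. \<alpha> (snd p - fst p) * w (f (snd p) - f (fst p)) * (g (snd p) - g (fst p))))
         (at 0 within S)"
proof -
  define L where "L = (LINT p|lborel2. \<alpha> (snd p - fst p) * w (f (snd p) - f (fst p)) * (g (snd p) - g (fst p)))"
  define n where "n h = (LINT x|lborel. \<bar>(f' h x - f x) / h - g x\<bar>)" for h
  define a where "a = 2 * (LINT x|lborel. \<bar>\<alpha> x\<bar>)"
  have g_int: "integrable lborel g" using g by (simp add: inX_def)
  obtain M where M: "AE p in lborel2. \<bar>f (fst p)\<bar> \<le> M \<and> \<bar>f (snd p)\<bar> \<le> M"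
    using f by (rule inX_AE_bounded_lborel2)
  obtain G where G: "AE p in lborel2. \<bar>g (fst p)\<bar> \<le> G \<and> \<bar>g (snd p)\<bar> \<le> G"
    using g by (rule inX_AE_bounded_lborel2)
  obtain C where C: "0 \<le> C" "\<And>a. \<bar>a\<bar> \<le> 2 * M \<Longrightarrow> \<bar>w a\<bar> \<le> C"
    using w by (rule Wpot_bound) blast
  note d_conv = X_difference_quotient_convergence[OF f g f' lim, folded n_def]
  have estimate: "\<forall>\<^sub>F h in at 0 within S. \<bar>(pair_potential \<alpha> w (f' h) - pair_potential \<alpha> w f) / h - L\<bar>
          \<le> a * C * n h + e * (a * (n h + (LINT x|lborel. \<bar>g x\<bar>)))"
    if "0 < e" for e
  proof -
    obtain \<delta> where "0 < \<delta>" and lin: "\<And>a b. \<bar>a\<bar> \<le> 2 * M + 1 \<Longrightarrow> \<bar>b\<bar> \<le> 2 * M + 1 \<Longrightarrow>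
        \<bar>b - a\<bar> \<le> \<delta> \<Longrightarrow> \<bar>Wpot w b - Wpot w a - w a * (b - a)\<bar> \<le> e * \<bar>b - a\<bar>"
      using Wpot_uniform_linearization[OF w \<open>0 < e\<close>] by metis
    have "((\<lambda>h. \<bar>h\<bar> * (2 + 2 * G)) \<longlongrightarrow> \<bar>0\<bar> * (2 + 2 * G)) (at 0 within S)"
      by (intro tendsto_intros)
    then have "\<forall>\<^sub>F h in at 0 within S. \<bar>h\<bar> * (2 + 2 * G) < min 1 \<delta>"
      using \<open>0 < \<delta>\<close> by (intro order_tendstoD(2)) auto
    moreover have "\<forall>\<^sub>F h in at 0 within S. h \<noteq> 0"
      by (simp add: eventually_at_filter)
    ultimately show ?thesis
      using f' d_conv(2)
    proof eventually_elim
      case (elim h)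
      then have "\<bar>(pair_potential \<alpha> w (f' h) - pair_potential \<alpha> w f) / h - L\<bar>
          \<le> a * ((e + C) * n h + e * (LINT x|lborel. \<bar>g x\<bar>))"
        unfolding L_def n_def a_def
        by (intro pair_potential_quotient_error[OF \<alpha> w f elim(3) g_int M G _ C lin])
          (use \<open>0 < e\<close> in auto)
      then show ?case by (simp add: algebra_simps)
    qed
  qed
  have "((\<lambda>h. a * (n h + (LINT x|lborel. \<bar>g x\<bar>))) \<longlongrightarrow> a * (0 + (LINT x|lborel. \<bar>g x\<bar>)))
      (at 0 within S)"
    by (intro tendsto_intros d_conv(1))
  with tendsto_mult_right_zero[OF d_conv(1)]
  have "((\<lambda>h. (pair_potential \<alpha> w (f' h) - pair_potential \<alpha> w f) / h - L) \<longlongrightarrow> 0)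
      (at 0 within S)"
    by (rule tendsto_zero_if_eventually_le) (rule estimate)
  then show ?thesis
    unfolding L_def by (rule LIM_zero_cancel)
qed

lemma energy_eq_kinetic_plus_potential:
  "energy \<alpha> w u u1 t = 1/2 * (LINT x|lborel. (u1 t x)\<^sup>2) + 1/2 * pair_potential \<alpha> w (u t)"
  by (simp add: energy_def pair_potential_def)

lemma energy_has_field_derivative_zero:
  fixes \<alpha> w :: "real \<Rightarrow> real" and u u1 u2 :: "real \<Rightarrow> real \<Rightarrow> real"
  assumes \<alpha>: "integrable lborel \<alpha>" and \<alpha>_even: "AE z in lborel. \<alpha> (- z) = \<alpha> z"
    and w: "continuous_on UNIV w" and w_odd: "\<And>z. w (- z) = - w z"
    and t: "t \<in> I" and u_X: "\<forall>s\<in>I. inX (u s) \<and> inX (u1 s)" and u2_X: "inX (u2 t)"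
    and u_d1: "X_has_deriv_within u u1 t I" and u_d2: "X_has_deriv_within u1 u2 t I"
    and eqn: "AE x in lborel. u2 t x = (LINT y|lborel. \<alpha> (y - x) * w (u t y - u t x))"
  shows "(energy \<alpha> w u u1 has_field_derivative 0) (at t within I)"
proof -
  let ?F = "at 0 within {h. t + h \<in> I}"
  let ?kinetic = "LINT x|lborel. u1 t x * u2 t x"
  have ev: "\<forall>\<^sub>F h in ?F. inX (u (t + h)) \<and> inX (u1 (t + h))"
    using u_X by (auto simp: eventually_at_filter)
  have u_tX: "inX (u t)" "inX (u1 t)" using u_X t by auto
  have "((\<lambda>h. 1/2 * (((LINT x|lborel. (u1 (t + h) x)\<^sup>2) - (LINT x|lborel. (u1 t x)\<^sup>2)) / h)
          + 1/2 * ((pair_potential \<alpha> w (u (t + h)) - pair_potential \<alpha> w (u t)) / h))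
      \<longlongrightarrow> 1/2 * (2 * ?kinetic) + 1/2 * (LINT p|lborel2. \<alpha> (snd p - fst p)
            * w (u t (snd p) - u t (fst p)) * (u1 t (snd p) - u1 t (fst p)))) ?F"
    using ev u_d1 u_d2 unfolding X_has_deriv_within_def
    by (intro tendsto_intros tendsto_quotient_integral_square tendsto_quotient_pair_potential
        \<alpha> w u_tX u2_X) (auto elim: eventually_mono)
  also have "(LINT p|lborel2. \<alpha> (snd p - fst p) * w (u t (snd p) - u t (fst p)) * (u1 t (snd p) - u1 t (fst p)))
      = - 2 * (LINT x|lborel. u1 t x * (LINT y|lborel. \<alpha> (y - x) * w (u t y - u t x)))"
    using u_tX by (intro pair_force_integral_antisymmetric \<alpha> \<alpha>_even w w_odd) (auto simp: inX_def)
  also have "(LINT x|lborel. u1 t x * (LINT y|lborel. \<alpha> (y - x) * w (u t y - u t x))) = ?kinetic"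
  proof -
    have [measurable]: "\<alpha> \<in> borel_measurable borel" "w \<in> borel_measurable borel"
      "u t \<in> borel_measurable borel" "u1 t \<in> borel_measurable borel" "u2 t \<in> borel_measurable borel"
      using \<alpha> w u_tX u2_X by (auto simp: inX_def dest: borel_measurable_integrable borel_measurable_continuous_onI)
    show ?thesis
      by (rule integral_cong_AE; (measurable)?) (use eqn in \<open>auto elim!: eventually_mono\<close>)
  qed
  finally show ?thesis
    by (intro has_field_derivative_within_if_quotient_tendsto)
      (simp add: energy_eq_kinetic_plus_potential algebra_simps diff_divide_distrib add_divide_distrib)
qed

theorem lemma4p1:
  fixes \<alpha> w \<phi> \<psi> :: "real \<Rightarrow> real"
    and u u1 u2 :: "real \<Rightarrow> real \<Rightarrow> real"
    and T :: ereal
  defines "I \<equiv> {t::real. 0 \<le> t \<and> ereal t < T}"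
  assumes alpha_L1: "integrable lborel \<alpha>"
    and alpha_even: "AE x in lborel. \<alpha> (- x) = \<alpha> x"
    and w_C1: "w C1_differentiable_on UNIV"
    and w_odd: "\<forall>x. w (- x) = - w x"
    and w0: "w 0 = 0"
    and phi: "inX \<phi>" and psi: "inX \<psi>"
    and u_X: "\<forall>t\<in>I. inX (u t) \<and> inX (u1 t) \<and> inX (u2 t)"
    and u_d1: "\<forall>t\<in>I. X_has_deriv_within u u1 t I"
    and u_d2: "\<forall>t\<in>I. X_has_deriv_within u1 u2 t I"
    and u2_cont: "X_continuous_on I u2"
    and eqn: "\<forall>t\<in>I. AE x in lborel.
                u2 t x = (LINT y|lborel. \<alpha> (y - x) * w (u t y - u t x))"
    and init_u: "AE x in lborel. u 0 x = \<phi> x"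
    and init_ut: "AE x in lborel. u1 0 x = \<psi> x"
  shows "(\<forall>t\<in>I. integrable lborel (\<lambda>x. (u1 t x)\<^sup>2)
              \<and> integrable (lborel \<Otimes>\<^sub>M lborel)
                   (\<lambda>p. \<alpha> (snd p - fst p) * Wpot w (u t (snd p) - u t (fst p))))
       \<and> (\<forall>t\<in>I. \<forall>s\<in>I. energy \<alpha> w u u1 t = energy \<alpha> w u u1 s)"
proof -
  have w: "continuous_on UNIV w"
    using w_C1 unfolding C1_differentiable_on_eq
    by (meson continuous_at_imp_continuous_on differentiable_imp_continuous_within)
  have "integrable lborel (\<lambda>x. (u1 t x)\<^sup>2)"
    and "integrable lborel2 (\<lambda>p. \<alpha> (snd p - fst p) * Wpot w (u t (snd p) - u t (fst p)))"
    if "t \<in> I" for t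
    using u_X that integrable_mult_inX[of "u1 t" "u1 t"] integrable_pair_potential[OF alpha_L1 w]
    by (auto simp: power2_eq_square inX_def)
  moreover have "convex I"
    unfolding I_def is_interval_convex_1[symmetric] is_interval_1
    by auto (meson ereal_less_eq(3) le_less_trans)
  then have "\<exists>c. \<forall>t\<in>I. energy \<alpha> w u u1 t = c"
  proof (rule has_field_derivative_zero_constant)
    fix t assume t: "t \<in> I"
    show "(energy \<alpha> w u u1 has_field_derivative 0) (at t within I)"
      by (rule energy_has_field_derivative_zero[OF alpha_L1 alpha_even w w_odd[rule_format] t _ _
            u_d1[rule_format, OF t] u_d2[rule_format, OF t] eqn[rule_format, OF t]])
        (use u_X t in auto)
  qed
  ultimately show ?thesis by auto
qed

end
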